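(* Let $\mathbb{K}$ be a field of characteristic $0$, let $m\geq 2$ and $d\geq 2$ be integers, let $M_1,\ldots,M_{\tau_m}$, $\tau_m=\binom{m+d-2}{d-1}$, be all the monomials of degree $d-1$ in $u_1,\ldots,u_m$, let $f=\sum_{j=1}^{\tau_m}x_jM_j$, and let $A=Q/\operatorname{Ann}_Q(f)$ be the associated full Perazzo algebra, where $Q=\mathbb{K}[X_1,\ldots,X_{\tau_m},U_1,\ldots,U_m]$ acts by differentiation. Then for $k=1,\ldots,\lfloor d/2\rfloor$, \[\dim_{\mathbb{K}} A_k=\binom{m+k-1}{k}+\binom{m+d-k-1}{d-k}.\] Moreover, for fixed $d$ there is $m_0$ such that for all $m\geq m_0$ the Hilbert function of $A$ is totally non-unimodal, i.e. $h_1>h_2>\cdots>h_{\lfloor d/2\rfloor}$ where $h_i=\dim A_i$.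
   Context: $A$ is a standard graded Artinian Gorenstein algebra of socle degree $d$ and codimension $m+\tau_m$. *)

theory Defs
  imports Complex_Main "HOL-Library.Function_Algebras"
begin

text \<open>Variables of Q: the x-variables are indexed by the monomials
  of degree d-1 in u_0..u_{m-1} themselves (exponent vectors beta :: nat => nat,
  zero outside {..<m}); this is a relabelling of x_1..x_tau_m.\<close>
datatype pvar = X "nat \<Rightarrow> nat" | U nat

text \<open>Monomials (exponent vectors) are functions pvar => nat; polynomials are
  coefficient functions (pvar => nat) => 'a.\<close>

definition u_monos :: "nat \<Rightarrow> nat \<Rightarrow> (nat \<Rightarrow> nat) set" where
  "u_monos m e = {\<beta>. (\<forall>i\<ge>m. \<beta> i = 0) \<and> (\<Sum>i<m. \<beta> i) = e}"

definition perazzo_vars :: "nat \<Rightarrow> nat \<Rightarrow> pvar set" where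
  "perazzo_vars m d = X ` u_monos m (d - 1) \<union> U ` {..<m}"

text \<open>The full Perazzo form f = sum over beta of x_beta * u^beta.\<close>
definition perazzo_f :: "nat \<Rightarrow> nat \<Rightarrow> (pvar \<Rightarrow> nat) \<Rightarrow> 'a::field" where
  "perazzo_f m d \<mu> = (if \<exists>\<beta>\<in>u_monos m (d - 1).
       \<mu> = (\<lambda>v. case v of X \<gamma> \<Rightarrow> (if \<gamma> = \<beta> then 1 else 0) | U i \<Rightarrow> \<beta> i)
     then 1 else 0)"

text \<open>Differentiation: the monomial operator with exponent vector a acting on
  a polynomial g (coefficient function), under the contraction/differentiation
  action: coefficient at b of (d^a g) is g(a+b) * prod_v (a_v+b_v)!/b_v!.\<close>
definition pderiv_mono :: "(pvar \<Rightarrow> nat) \<Rightarrow> ((pvar \<Rightarrow> nat) \<Rightarrow> 'a::field) \<Rightarrow> (pvar \<Rightarrow> nat) \<Rightarrow> 'a" where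
  "pderiv_mono a g b = g (\<lambda>v. a v + b v) *
     (\<Prod>v\<in>{v. a v \<noteq> 0}. of_nat (fact (a v + b v) div fact (b v)))"

definition Q_monos :: "nat \<Rightarrow> nat \<Rightarrow> nat \<Rightarrow> (pvar \<Rightarrow> nat) set" where
  "Q_monos m d k = {a. (\<forall>v. a v \<noteq> 0 \<longrightarrow> v \<in> perazzo_vars m d)
                       \<and> (\<Sum>v\<in>perazzo_vars m d. a v) = k}"

definition perazzo_derivs :: "nat \<Rightarrow> nat \<Rightarrow> nat \<Rightarrow> ((pvar \<Rightarrow> nat) \<Rightarrow> 'a::field) set" where
  "perazzo_derivs m d k = (\<lambda>a. pderiv_mono a (perazzo_f m d)) ` Q_monos m d k"

text \<open>dim_K A_k = dim Q_k / Ann_Q(f)_k = dim (Q_k o f) = dim span of the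
  k-th order derivatives of f.\<close>
definition perazzo_h :: "'a::field itself \<Rightarrow> nat \<Rightarrow> nat \<Rightarrow> nat \<Rightarrow> nat" where
  "perazzo_h _ m d k =
     vector_space.dim (\<lambda>(c::'a) g b. c * g b) (perazzo_derivs m d k :: ((pvar \<Rightarrow> nat) \<Rightarrow> 'a) set)"

end

theory Submission
  imports Defs "HOL-Library.Multiset" "HOL-Library.Indicator_Function"
begin

text \<open>A derivative of order k of f = sum x_beta u^beta either involves an x-variable, and is
  then a multiple of a single monomial u^gamma of degree d - k (each of which occurs), or it is a
  pure u-derivative D_alpha f of order k. The latter contain no monomial u^gamma, and D_alpha f
  is the only one of them containing the monomial x_(alpha + c e_0) u_0^c, where c = d - 1 - k.
  Hence the monomials u^gamma together with the D_alpha f form a basis of A_k, so h_k counts the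
  monomials of degree k plus those of degree d - k in m variables. For m \<ge> 3 the strict decrease
  of h_k then comes down to Pascal's rule.\<close>

lemma u_monos_eq_count_multisets: "u_monos m e = count ` multisets_of_size {..<m} e"
proof (intro set_eqI iffI)
  fix \<beta> assume b: "\<beta> \<in> u_monos m e"
  have fin: "finite {x. \<beta> x > 0}"
    by (rule finite_subset[of _ "{..<m}"]) (use b in \<open>auto simp: u_monos_def not_less[symmetric]\<close>)
  define N where "N = Abs_multiset \<beta>"
  have cN: "count N = \<beta>" using fin by (simp add: N_def)
  have s: "set_mset N \<subseteq> {..<m}"
  proof
    fix x assume "x \<in># N"
    then show "x \<in> {..<m}" using b cN by (auto simp: u_monos_def) (meson count_eq_zero_iff not_le)
  qed
  have "size N = (\<Sum>i\<in>set_mset N. \<beta> i)" by (simp add: size_multiset_overloaded_eq cN)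
  also have "\<dots> = (\<Sum>i<m. \<beta> i)"
    by (rule sum.mono_neutral_left) (use s cN in \<open>auto simp: count_eq_zero_iff\<close>)
  finally have "size N = e" using b by (simp add: u_monos_def)
  then show "\<beta> \<in> count ` multisets_of_size {..<m} e"
    using s cN by (auto simp: multisets_of_size_def intro!: image_eqI[of _ _ N])
next
  fix \<beta> assume "\<beta> \<in> count ` multisets_of_size {..<m} e"
  then obtain N where N: "set_mset N \<subseteq> {..<m}" "size N = e" "\<beta> = count N"
    by (auto simp: multisets_of_size_def)
  have "size N = (\<Sum>i<m. count N i)"
    unfolding size_multiset_overloaded_eq
    by (rule sum.mono_neutral_left) (use N in \<open>auto simp: count_eq_zero_iff\<close>)
  then show "\<beta> \<in> u_monos m e" using N
    by (auto simp: u_monos_def) (meson count_eq_zero_iff lessThan_iff not_le subsetD)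
qed

lemma card_u_monos: "card (u_monos m e) = (m + e - 1) choose e"
proof -
  have "card (u_monos m e) = card (multisets_of_size {..<m} e)"
    unfolding u_monos_eq_count_multisets by (rule card_image) (simp add: inj_on_def multiset_eq_iff)
  then show ?thesis by (simp add: card_multisets_of_size)
qed

lemma finite_u_monos: "finite (u_monos m e)"
  unfolding u_monos_eq_count_multisets by auto

interpretation fun_space: vector_space "(\<lambda>c g b. c * g b) :: 'a::field \<Rightarrow> ('b \<Rightarrow> 'a) \<Rightarrow> 'b \<Rightarrow> 'a"
  by unfold_locales (auto simp: fun_eq_iff algebra_simps)

lemma sum_fun_apply: "(\<Sum>y\<in>B. h y) p = (\<Sum>y\<in>B. h y p)"
  by (induction B rule: infinite_finite_induct) auto

lemma
  fixes \<phi> :: "'i \<Rightarrow> 'b \<Rightarrow> 'a::field"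
  assumes fin: "finite I"
    and own: "\<And>i. i \<in> I \<Longrightarrow> \<phi> i (p i) \<noteq> 0"
    and others: "\<And>i j. i \<in> I \<Longrightarrow> j \<in> I \<Longrightarrow> j \<noteq> i \<Longrightarrow> \<phi> j (p i) = 0"
  shows inj_on_if_private_points: "inj_on \<phi> I"
    and independent_image_if_private_points: "fun_space.independent (\<phi> ` I)"
proof -
  show inj: "inj_on \<phi> I"
  proof (rule inj_onI, rule ccontr)
    fix i j assume "i \<in> I" "j \<in> I" "\<phi> i = \<phi> j" "i \<noteq> j"
    then show False using own[of i] others[of i j] by simp
  qed
  show "fun_space.independent (\<phi> ` I)"
  proof (rule fun_space.independent_if_scalars_zero)
    fix c :: "('b \<Rightarrow> 'a) \<Rightarrow> 'a" and v
    assume lin: "(\<Sum>w\<in>\<phi> ` I. (\<lambda>b. c w * w b)) = 0" and "v \<in> \<phi> ` I"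
    then obtain i where i: "i \<in> I" "v = \<phi> i" by blast
    have "0 = (\<Sum>w\<in>\<phi> ` I. (\<lambda>b. c w * w b)) (p i)" using lin by simp
    also have "\<dots> = (\<Sum>j\<in>I. c (\<phi> j) * \<phi> j (p i))"
      by (simp add: sum_fun_apply sum.reindex[OF inj])
    also have "\<dots> = c (\<phi> i) * \<phi> i (p i)"
      using i(1) by (intro sum.remove[OF fin, THEN trans]) (auto intro!: sum.neutral simp: others)
    finally show "c v = 0" using own[OF i(1)] i(2) by simp
  qed (use fin in simp)
qed

lemma eq_scaled_indicator:
  fixes g :: "'b \<Rightarrow> 'a::field"
  assumes "\<And>b'. g b' \<noteq> 0 \<Longrightarrow> b' = b"
  shows "g = (\<lambda>b'. g b * indicator {b} b')"
proof
  fix b' show "g b' = g b * indicator {b} b'" using assms by (cases "b' = b") auto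
qed

definition u_monomial :: "(nat \<Rightarrow> nat) \<Rightarrow> pvar \<Rightarrow> nat" where
  "u_monomial \<alpha> = (\<lambda>v. case v of X _ \<Rightarrow> 0 | U i \<Rightarrow> \<alpha> i)"

definition x_u_monomial :: "(nat \<Rightarrow> nat) \<Rightarrow> (nat \<Rightarrow> nat) \<Rightarrow> pvar \<Rightarrow> nat" where
  "x_u_monomial \<beta> \<gamma> = (\<lambda>v. case v of X \<delta> \<Rightarrow> (if \<delta> = \<beta> then 1 else 0) | U i \<Rightarrow> \<gamma> i)"

lemma u_monomial_simps [simp]: "u_monomial \<alpha> (X \<delta>) = 0" "u_monomial \<alpha> (U i) = \<alpha> i"
  by (simp_all add: u_monomial_def)

lemma x_u_monomial_simps [simp]:
  "x_u_monomial \<beta> \<gamma> (X \<delta>) = (if \<delta> = \<beta> then 1 else 0)" "x_u_monomial \<beta> \<gamma> (U i) = \<gamma> i"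
  by (simp_all add: x_u_monomial_def)

lemma inj_u_monomial: "inj u_monomial"
proof (rule injI, rule ext)
  fix \<alpha> \<alpha>' i assume "u_monomial \<alpha> = u_monomial \<alpha>'"
  then have "u_monomial \<alpha> (U i) = u_monomial \<alpha>' (U i)" by simp
  then show "\<alpha> i = \<alpha>' i" by simp
qed

lemma u_monomial_neq_x_u_monomial: "u_monomial \<alpha> \<noteq> x_u_monomial \<beta> \<gamma>"
proof
  assume "u_monomial \<alpha> = x_u_monomial \<beta> \<gamma>"
  then have "u_monomial \<alpha> (X \<beta>) = x_u_monomial \<beta> \<gamma> (X \<beta>)" by simp
  then show False by simp
qed

lemma u_monomial_plus_x_u_monomial: "u_monomial \<alpha> + x_u_monomial \<beta> \<gamma> = x_u_monomial \<beta> (\<alpha> + \<gamma>)"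
proof
  fix v show "(u_monomial \<alpha> + x_u_monomial \<beta> \<gamma>) v = x_u_monomial \<beta> (\<alpha> + \<gamma>) v" by (cases v) auto
qed

lemma perazzo_f_nonzero_iff:
  "perazzo_f m d \<mu> \<noteq> (0::'a::field) \<longleftrightarrow> (\<exists>\<beta>\<in>u_monos m (d - 1). \<mu> = x_u_monomial \<beta> \<beta>)"
  by (simp add: perazzo_f_def x_u_monomial_def)

lemma add_mem_u_monos:
  "\<alpha> \<in> u_monos m p \<Longrightarrow> \<gamma> \<in> u_monos m q \<Longrightarrow> \<alpha> + \<gamma> \<in> u_monos m (p + q)"
  by (auto simp: u_monos_def sum.distrib)

lemma u0_power_mem_u_monos: "1 \<le> m \<Longrightarrow> (\<lambda>_. 0)(0 := c) \<in> u_monos m c"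
  by (auto simp: u_monos_def)

lemma sum_perazzo_vars:
  "(\<Sum>v\<in>perazzo_vars m d. h v) = (\<Sum>\<beta>\<in>u_monos m (d - 1). h (X \<beta>)) + (\<Sum>i<m. h (U i))"
proof -
  have "(\<Sum>v\<in>perazzo_vars m d. h v) = (\<Sum>v\<in>X ` u_monos m (d - 1). h v) + (\<Sum>v\<in>U ` {..<m}. h v)"
    unfolding perazzo_vars_def by (rule sum.union_disjoint) (auto simp: finite_u_monos)
  also have "\<dots> = (\<Sum>\<beta>\<in>u_monos m (d - 1). h (X \<beta>)) + (\<Sum>i<m. h (U i))"
    by (simp add: sum.reindex inj_on_def)
  finally show ?thesis .
qed

lemma u_monomial_mem_Q_monos: "\<alpha> \<in> u_monos m k \<Longrightarrow> u_monomial \<alpha> \<in> Q_monos m d k"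
proof -
  assume \<alpha>: "\<alpha> \<in> u_monos m k"
  have "u_monomial \<alpha> v \<noteq> 0 \<Longrightarrow> v \<in> perazzo_vars m d" for v
    using \<alpha> by (cases v) (auto simp: perazzo_vars_def u_monos_def not_less[symmetric])
  moreover have "(\<Sum>v\<in>perazzo_vars m d. u_monomial \<alpha> v) = k"
    using \<alpha> by (simp add: sum_perazzo_vars u_monos_def)
  ultimately show ?thesis by (auto simp: Q_monos_def)
qed

lemma Q_monos_without_X:
  assumes a: "a \<in> Q_monos m d k" and no_X: "\<And>\<delta>. a (X \<delta>) = 0"
  shows "\<exists>\<alpha>\<in>u_monos m k. a = u_monomial \<alpha>"
proof
  define \<alpha> where "\<alpha> = (\<lambda>i. a (U i))"
  show "a = u_monomial \<alpha>"
  proof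
    fix v show "a v = u_monomial \<alpha> v" using no_X by (cases v) (auto simp: \<alpha>_def)
  qed
  have "\<alpha> i = 0" if "i \<ge> m" for i
    using a that by (auto simp: \<alpha>_def Q_monos_def perazzo_vars_def)
  moreover have "(\<Sum>i<m. \<alpha> i) = k"
    using a no_X by (simp add: Q_monos_def sum_perazzo_vars \<alpha>_def)
  ultimately show "\<alpha> \<in> u_monos m k" by (simp add: u_monos_def)
qed

lemma pderiv_mono_nonzero_iff:
  "pderiv_mono a g b \<noteq> (0::'a::field_char_0) \<longleftrightarrow> g (a + b) \<noteq> 0"
proof -
  have "(of_nat (fact (a v + b v) div fact (b v)) :: 'a) \<noteq> 0" for v
    by (simp add: div_greater_zero_iff fact_mono)
  then have "(\<Prod>v\<in>{v. a v \<noteq> 0}. of_nat (fact (a v + b v) div fact (b v)) :: 'a) \<noteq> 0"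
    by (cases "finite {v. a v \<noteq> 0}") (auto simp: prod_zero_iff)
  then show ?thesis by (simp add: pderiv_mono_def plus_fun_def)
qed

lemma perazzo_deriv_nonzero_iff:
  "pderiv_mono a (perazzo_f m d) b \<noteq> (0::'a::field_char_0)
     \<longleftrightarrow> (\<exists>\<beta>\<in>u_monos m (d - 1). a + b = x_u_monomial \<beta> \<beta>)"
  by (simp add: pderiv_mono_nonzero_iff perazzo_f_nonzero_iff)

lemma x_deriv_support_unique:
  assumes "a (X \<delta>) \<noteq> 0"
    and "pderiv_mono a (perazzo_f m d) b \<noteq> (0::'a::field_char_0)"
    and "pderiv_mono a (perazzo_f m d) b' \<noteq> (0::'a)"
  shows "b' = b"
proof -
  have "a + c = x_u_monomial \<delta> \<delta>" if nonzero: "pderiv_mono a (perazzo_f m d) c \<noteq> (0::'a)" for c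
  proof -
    obtain \<beta> where eq: "a + c = x_u_monomial \<beta> \<beta>"
      using nonzero unfolding perazzo_deriv_nonzero_iff by blast
    then have "a (X \<delta>) + c (X \<delta>) = x_u_monomial \<beta> \<beta> (X \<delta>)" by (metis plus_fun_apply)
    with \<open>a (X \<delta>) \<noteq> 0\<close> have "\<beta> = \<delta>" by (auto split: if_splits)
    with eq show ?thesis by simp
  qed
  then have "a + b' = a + b" using assms by simp
  then show ?thesis by (simp add: fun_eq_iff)
qed

lemma x_deriv_support_is_u_monomial:
  assumes a: "a \<in> Q_monos m d k" and "a (X \<delta>) \<noteq> 0" and "1 \<le> d"
    and nonzero: "pderiv_mono a (perazzo_f m d) b \<noteq> (0::'a::field_char_0)"
  shows "\<exists>\<gamma>\<in>u_monos m (d - k). b = u_monomial \<gamma>"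
proof
  obtain \<beta> where \<beta>: "\<beta> \<in> u_monos m (d - 1)" and eq: "\<And>v. a v + b v = x_u_monomial \<beta> \<beta> v"
    using nonzero unfolding perazzo_deriv_nonzero_iff by (metis plus_fun_apply)
  have "\<beta> = \<delta>" using eq[of "X \<delta>"] \<open>a (X \<delta>) \<noteq> 0\<close> by (auto split: if_splits)
  then have no_X: "b (X \<delta>') = 0" for \<delta>'
    using eq[of "X \<delta>'"] \<open>a (X \<delta>) \<noteq> 0\<close> by (auto split: if_splits)
  define \<gamma> where "\<gamma> = (\<lambda>i. b (U i))"
  show "b = u_monomial \<gamma>"
  proof
    fix v show "b v = u_monomial \<gamma> v" using no_X by (cases v) (auto simp: \<gamma>_def)
  qed
  have "\<gamma> i = 0" if "i \<ge> m" for i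
    using \<beta> eq[of "U i"] that by (auto simp: \<gamma>_def u_monos_def)
  moreover have "(\<Sum>v\<in>perazzo_vars m d. a v + b v) = 1 + (d - 1)"
    using \<beta> by (simp only: eq) (simp add: sum_perazzo_vars finite_u_monos sum.delta, simp add: u_monos_def)
  then have "k + (\<Sum>i<m. \<gamma> i) = d"
    using a \<open>1 \<le> d\<close> by (simp add: sum.distrib Q_monos_def sum_perazzo_vars no_X \<gamma>_def)
  ultimately show "\<gamma> \<in> u_monos m (d - k)" by (simp add: u_monos_def)
qed

lemma x_deriv_in_span_u_indicators:
  assumes "a \<in> Q_monos m d k" and "a (X \<delta>) \<noteq> 0" and "1 \<le> d"
  shows "pderiv_mono a (perazzo_f m d)
           \<in> fun_space.span ((\<lambda>\<gamma>. indicator {u_monomial \<gamma>} :: _ \<Rightarrow> 'a::field_char_0) ` u_monos m (d - k))"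
    (is "?F \<in> fun_space.span ?B")
proof (cases "\<exists>b. ?F b \<noteq> 0")
  case True
  then obtain b where nonzero: "?F b \<noteq> 0" by blast
  then obtain \<gamma> where "\<gamma> \<in> u_monos m (d - k)" and b: "b = u_monomial \<gamma>"
    using x_deriv_support_is_u_monomial[OF assms] by blast
  then have "indicator {b} \<in> fun_space.span ?B" by (auto intro: fun_space.span_base)
  then have "(\<lambda>b'. ?F b * indicator {b} b') \<in> fun_space.span ?B" by (rule fun_space.span_scale)
  moreover have "?F = (\<lambda>b'. ?F b * indicator {b} b')"
    using x_deriv_support_unique[OF \<open>a (X \<delta>) \<noteq> 0\<close> nonzero] by (intro eq_scaled_indicator) blast
  ultimately show ?thesis by simp
next
  case False
  then have "?F = 0" by (simp add: fun_eq_iff)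
  then show ?thesis by (simp add: fun_space.span_zero)
qed

lemma u_indicator_in_span_perazzo_derivs:
  assumes "1 \<le> m" "1 \<le> k" "k \<le> d" and \<gamma>: "\<gamma> \<in> u_monos m (d - k)"
  shows "(indicator {u_monomial \<gamma>} :: _ \<Rightarrow> 'a::field_char_0) \<in> fun_space.span (perazzo_derivs m d k)"
proof -
  define e where "e = (\<lambda>_::nat. 0::nat)(0 := k - 1)"
  define a where "a = x_u_monomial (\<gamma> + e) e"
  let ?F = "pderiv_mono a (perazzo_f m d) :: _ \<Rightarrow> 'a"
  have "\<gamma> + e \<in> u_monos m (d - k + (k - 1))"
    unfolding e_def by (intro add_mem_u_monos \<gamma> u0_power_mem_u_monos \<open>1 \<le> m\<close>)
  then have \<beta>: "\<gamma> + e \<in> u_monos m (d - 1)" using assms by simp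
  have "a v \<noteq> 0 \<Longrightarrow> v \<in> perazzo_vars m d" for v
    using \<beta> \<open>1 \<le> m\<close> by (cases v) (auto simp: a_def e_def perazzo_vars_def split: if_splits)
  moreover have "(\<Sum>v\<in>perazzo_vars m d. a v) = k"
    using \<beta> assms by (simp add: sum_perazzo_vars a_def e_def finite_u_monos sum.delta)
  ultimately have "a \<in> Q_monos m d k" by (auto simp: Q_monos_def)
  then have "?F \<in> fun_space.span (perazzo_derivs m d k)"
    by (auto simp: perazzo_derivs_def intro: fun_space.span_base)
  then have in_span: "(\<lambda>b. inverse (?F (u_monomial \<gamma>)) * ?F b) \<in> fun_space.span (perazzo_derivs m d k)"
    by (rule fun_space.span_scale)
  have "a + u_monomial \<gamma> = x_u_monomial (\<gamma> + e) (\<gamma> + e)"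
    by (simp add: a_def add.commute u_monomial_plus_x_u_monomial)
  with \<beta> have nonzero: "?F (u_monomial \<gamma>) \<noteq> 0"
    unfolding perazzo_deriv_nonzero_iff by blast
  have "a (X (\<gamma> + e)) \<noteq> 0" by (simp add: a_def)
  from x_deriv_support_unique[OF this nonzero]
  have "?F = (\<lambda>b. ?F (u_monomial \<gamma>) * indicator {u_monomial \<gamma>} b)"
    by (intro eq_scaled_indicator) blast
  then have "(\<lambda>b. inverse (?F (u_monomial \<gamma>)) * ?F b) = indicator {u_monomial \<gamma>}"
    using nonzero by (metis (no_types, lifting) mult.assoc left_inverse mult_1 ext)
  with in_span show ?thesis by simp
qed

lemma u_deriv_vanishes_at_u_monomial:
  "pderiv_mono (u_monomial \<alpha>) (perazzo_f m d) (u_monomial \<gamma>) = (0::'a::field_char_0)"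
proof (rule ccontr)
  assume "pderiv_mono (u_monomial \<alpha>) (perazzo_f m d) (u_monomial \<gamma>) \<noteq> (0::'a)"
  then obtain \<beta> where "u_monomial \<alpha> + u_monomial \<gamma> = x_u_monomial \<beta> \<beta>"
    unfolding perazzo_deriv_nonzero_iff by blast
  then have "u_monomial \<alpha> (X \<beta>) + u_monomial \<gamma> (X \<beta>) = x_u_monomial \<beta> \<beta> (X \<beta>)"
    by (metis plus_fun_apply)
  then show False by simp
qed

lemma x_u_monomial_eq_iff: "x_u_monomial \<beta> \<gamma> = x_u_monomial \<beta>' \<gamma>' \<longleftrightarrow> \<beta> = \<beta>' \<and> \<gamma> = \<gamma>'"
proof
  assume eq: "x_u_monomial \<beta> \<gamma> = x_u_monomial \<beta>' \<gamma>'"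
  have "x_u_monomial \<beta> \<gamma> (X \<beta>) = x_u_monomial \<beta>' \<gamma>' (X \<beta>)" using eq by simp
  moreover have "x_u_monomial \<beta> \<gamma> (U i) = x_u_monomial \<beta>' \<gamma>' (U i)" for i using eq by simp
  ultimately show "\<beta> = \<beta>' \<and> \<gamma> = \<gamma>'" by (auto split: if_splits)
qed simp

lemma u_deriv_at_x_u_monomial_nonzero_iff:
  "pderiv_mono (u_monomial \<alpha>) (perazzo_f m d) (x_u_monomial \<beta> \<gamma>) \<noteq> (0::'a::field_char_0)
     \<longleftrightarrow> \<beta> \<in> u_monos m (d - 1) \<and> \<beta> = \<alpha> + \<gamma>"
  by (auto simp: perazzo_deriv_nonzero_iff u_monomial_plus_x_u_monomial x_u_monomial_eq_iff)

definition perazzo_basis ::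
    "nat \<Rightarrow> nat \<Rightarrow> (nat \<Rightarrow> nat) + (nat \<Rightarrow> nat) \<Rightarrow> (pvar \<Rightarrow> nat) \<Rightarrow> 'a::field_char_0" where
  "perazzo_basis m d =
     case_sum (\<lambda>\<gamma>. indicator {u_monomial \<gamma>}) (\<lambda>\<alpha>. pderiv_mono (u_monomial \<alpha>) (perazzo_f m d))"

lemma span_perazzo_basis:
  assumes "1 \<le> m" "1 \<le> k" "k < d"
  shows "fun_space.span (perazzo_basis m d ` (u_monos m (d - k) <+> u_monos m k))
       = fun_space.span (perazzo_derivs m d k :: ((pvar \<Rightarrow> nat) \<Rightarrow> 'a::field_char_0) set)"
proof -
  let ?B1 = "(\<lambda>\<gamma>. indicator {u_monomial \<gamma>} :: _ \<Rightarrow> 'a) ` u_monos m (d - k)"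
  let ?D = "perazzo_derivs m d k :: ((pvar \<Rightarrow> nat) \<Rightarrow> 'a) set"
  let ?B2 = "(\<lambda>\<alpha>. pderiv_mono (u_monomial \<alpha>) (perazzo_f m d) :: _ \<Rightarrow> 'a) ` u_monos m k"
  have basis: "perazzo_basis m d ` (u_monos m (d - k) <+> u_monos m k) = ?B1 \<union> ?B2"
    by (simp add: perazzo_basis_def Plus_def image_Un image_image)
  have "?B1 \<subseteq> fun_space.span ?D"
    using u_indicator_in_span_perazzo_derivs[OF assms(1,2) less_imp_le[OF assms(3)]] by blast
  moreover have "?B2 \<subseteq> ?D"
    by (auto simp: perazzo_derivs_def intro: u_monomial_mem_Q_monos)
  moreover have "?D \<subseteq> fun_space.span (?B1 \<union> ?B2)"
  proof
    fix g assume "g \<in> ?D"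
    then obtain a where a: "a \<in> Q_monos m d k" and g: "g = pderiv_mono a (perazzo_f m d)"
      by (auto simp: perazzo_derivs_def)
    show "g \<in> fun_space.span (?B1 \<union> ?B2)"
    proof (cases "\<exists>\<delta>. a (X \<delta>) \<noteq> 0")
      case True
      then obtain \<delta> where "a (X \<delta>) \<noteq> 0" by blast
      with a assms have "g \<in> fun_space.span ?B1"
        unfolding g by (intro x_deriv_in_span_u_indicators) auto
      then show ?thesis using fun_space.span_mono[of ?B1 "?B1 \<union> ?B2"] by blast
    next
      case False
      then obtain \<alpha> where "\<alpha> \<in> u_monos m k" "a = u_monomial \<alpha>"
        using Q_monos_without_X[OF a] by blast
      then show ?thesis unfolding g by (auto intro: fun_space.span_base)
    qed
  qed
  ultimately show ?thesis
    unfolding basis fun_space.span_eq using fun_space.span_superset[of ?D] by blast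
qed

lemma perazzo_basis_independent:
  assumes "1 \<le> m" "k < d"
  shows "inj_on (perazzo_basis m d :: _ \<Rightarrow> _ \<Rightarrow> 'a::field_char_0) (u_monos m (d - k) <+> u_monos m k)"
    and "fun_space.independent
           (perazzo_basis m d ` (u_monos m (d - k) <+> u_monos m k) :: (_ \<Rightarrow> 'a) set)"
proof -
  define e where "e = (\<lambda>_::nat. 0::nat)(0 := d - 1 - k)"
  define p where "p = case_sum u_monomial (\<lambda>\<alpha>. x_u_monomial (\<alpha> + e) e)"
  have shift_mem: "\<alpha> + e \<in> u_monos m (d - 1)" if "\<alpha> \<in> u_monos m k" for \<alpha>
    using add_mem_u_monos[OF that u0_power_mem_u_monos[OF \<open>1 \<le> m\<close>], of "d - 1 - k"] assms
    by (simp add: e_def)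
  have own: "(perazzo_basis m d i :: _ \<Rightarrow> 'a) (p i) \<noteq> 0"
    if "i \<in> u_monos m (d - k) <+> u_monos m k" for i
  proof (cases i)
    case (Inr \<alpha>)
    with that have "\<alpha> + e \<in> u_monos m (d - 1)" using shift_mem by auto
    then show ?thesis
      using u_deriv_at_x_u_monomial_nonzero_iff[of \<alpha> m d "\<alpha> + e" e, where 'a='a]
      by (simp add: Inr perazzo_basis_def p_def)
  qed (simp add: perazzo_basis_def p_def)
  have others: "(perazzo_basis m d j :: _ \<Rightarrow> 'a) (p i) = 0" if "j \<noteq> i" for i j
    using that u_monomial_neq_x_u_monomial[symmetric] u_deriv_at_x_u_monomial_nonzero_iff[where 'a='a]
    by (cases i; cases j)
       (auto simp: perazzo_basis_def p_def u_deriv_vanishes_at_u_monomial inj_eq[OF inj_u_monomial])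
  have "finite (u_monos m (d - k) <+> u_monos m k)" by (simp add: finite_u_monos)
  note private_points = this own others
  show "inj_on (perazzo_basis m d :: _ \<Rightarrow> _ \<Rightarrow> 'a) (u_monos m (d - k) <+> u_monos m k)"
    by (rule inj_on_if_private_points[where \<phi> = "perazzo_basis m d" and p = p, OF private_points])
  show "fun_space.independent
          (perazzo_basis m d ` (u_monos m (d - k) <+> u_monos m k) :: (_ \<Rightarrow> 'a) set)"
    by (rule independent_image_if_private_points[where \<phi> = "perazzo_basis m d" and p = p, OF private_points])
qed

lemma perazzo_h_eq_card_u_monos:
  assumes "1 \<le> m" "1 \<le> k" "k < d"
  shows "perazzo_h TYPE('a::field_char_0) m d k = card (u_monos m k) + card (u_monos m (d - k))"
proof -
  let ?I = "u_monos m (d - k) <+> u_monos m k"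
  have "perazzo_h TYPE('a) m d k = fun_space.dim (perazzo_derivs m d k :: ((pvar \<Rightarrow> nat) \<Rightarrow> 'a) set)"
    by (simp add: perazzo_h_def)
  also have "\<dots> = card (perazzo_basis m d ` ?I :: ((pvar \<Rightarrow> nat) \<Rightarrow> 'a) set)"
    using span_perazzo_basis[OF assms] perazzo_basis_independent(2)[OF assms(1,3)]
    by (rule fun_space.dim_eq_card)
  also have "\<dots> = card ?I"
    by (rule card_image[OF perazzo_basis_independent(1)[OF assms(1,3)]])
  finally show ?thesis by (simp add: finite_u_monos card_Plus add.commute)
qed

lemma perazzo_h_formula:
  assumes "1 \<le> m" "1 \<le> k" "k < d"
  shows "perazzo_h TYPE('a::field_char_0) m d k
           = (m + k - 1 choose k) + (m + d - k - 1 choose (d - k))"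
  using perazzo_h_eq_card_u_monos[OF assms, where 'a='a] assms by (simp add: card_u_monos)

lemma binomial_right_strict_mono:
  assumes "0 < r" "r \<le> Suc x" "x < y"
  shows "x choose r < y choose r"
proof -
  obtain r' where r: "r = Suc r'" using \<open>0 < r\<close> gr0_implies_Suc by blast
  have "x choose r < Suc x choose r" using assms by (simp add: r)
  also have "\<dots> \<le> y choose r" using \<open>x < y\<close> by (intro binomial_right_mono) simp
  finally show ?thesis .
qed

lemma binomial_pair_sum_decrease:
  assumes "2 \<le> n" "i < e"
  shows "(n + Suc i choose Suc i) + (n + e choose e) < (n + i choose i) + (n + Suc e choose Suc e)"
proof -
  have "n + i choose Suc i = n + i choose (n - 1)" "n + e choose Suc e = n + e choose (n - 1)"
    using binomial_symmetric[of "Suc i" "n + i"] binomial_symmetric[of "Suc e" "n + e"] assms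
    by (simp_all add: add.commute)
  moreover have "n + i choose (n - 1) < n + e choose (n - 1)"
    using assms by (intro binomial_right_strict_mono) auto
  ultimately show ?thesis by simp
qed

lemma perazzo_h_decreasing:
  assumes "3 \<le> m" "1 \<le> i" "i < d div 2"
  shows "perazzo_h TYPE('a::field_char_0) m d (Suc i) < perazzo_h TYPE('a) m d i"
proof -
  obtain n where m: "m = Suc n" using assms(1) by (cases m) auto
  define e where "e = d - Suc i"
  have "i < e" "d - i = Suc e" using assms(3) by (auto simp: e_def)
  moreover have "perazzo_h TYPE('a) m d (Suc i) = (n + Suc i choose Suc i) + (n + e choose e)"
    using perazzo_h_eq_card_u_monos[of m "Suc i" d, where 'a='a] assms \<open>i < e\<close>
    by (simp add: card_u_monos m e_def)
  moreover have "perazzo_h TYPE('a) m d i = (n + i choose i) + (n + (d - i) choose (d - i))"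
    using perazzo_h_eq_card_u_monos[of m i d, where 'a='a] assms \<open>i < e\<close>
    by (simp add: card_u_monos m e_def)
  ultimately show ?thesis using binomial_pair_sum_decrease[of n i e] assms(1) by (simp add: m)
qed

theorem proposition2p3:
  fixes d :: nat
  assumes "d \<ge> 2"
  shows "(\<forall>m\<ge>2. \<forall>k\<in>{1..d div 2}.
            perazzo_h TYPE('a::field_char_0) m d k
              = (m + k - 1 choose k) + (m + d - k - 1 choose (d - k)))
       \<and> (\<exists>m0\<ge>2. \<forall>m\<ge>m0. \<forall>i. 1 \<le> i \<and> i < d div 2 \<longrightarrow>
            perazzo_h TYPE('a) m d (i + 1) < perazzo_h TYPE('a) m d i)"
proof
  show "\<forall>m\<ge>2. \<forall>k\<in>{1..d div 2}.
      perazzo_h TYPE('a) m d k = (m + k - 1 choose k) + (m + d - k - 1 choose (d - k))"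
  proof (intro allI impI ballI)
    fix m k :: nat assume "2 \<le> m" "k \<in> {1..d div 2}"
    with assms show "perazzo_h TYPE('a) m d k = (m + k - 1 choose k) + (m + d - k - 1 choose (d - k))"
      by (intro perazzo_h_formula) auto
  qed
  show "\<exists>m0\<ge>2. \<forall>m\<ge>m0. \<forall>i. 1 \<le> i \<and> i < d div 2 \<longrightarrow>
      perazzo_h TYPE('a) m d (i + 1) < perazzo_h TYPE('a) m d i"
    using perazzo_h_decreasing by (intro exI[of _ 3]) auto
qed

end
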